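(* Let $n=2$, assume Assumptions A and B, $c_1^2+c_2^2>0$, and that the solution $S$ of (IVP) exists on $[r_0,\infty)$ with limit $s_\infty=\lim_{r\to\infty}S(r)$. If $s_\infty\notin\{0,1\}$, then $c_1c_2>0$ and $s_\infty=s^*$.
   Context: For $i=1,2$, $g_i(s)=a^{(i)}_0+a^{(i)}_1s^{\alpha^{(i)}_1}+\dots+a^{(i)}_{N_i}s^{\alpha^{(i)}_{N_i}}$ ($s\ge0$) with $N_i\ge0$, $a^{(i)}_0>0$, $a^{(i)}_j\ge0$, real $0<\alpha^{(i)}_1<\dots<\alpha^{(i)}_{N_i}$; $G_i(u)=g_i(|u|)u$ for $u\in\mathbb R$. Assumption A: $f_1,f_2\in C([0,1])\cap C^1((0,1))$, $f_1(0)=0$, $f_2(1)=0$, $f_1'>0$, $f_2'<0$ on $(0,1)$. Assumption B: $p_c'\in C^1((0,1))$, $p_c'>0$ on $(0,1)$. $F_i(S)=1/(p_c'(S)f_i(S))$. (IVP) with dimension $n$: $S'(r)=G_2(c_2r^{1-n})F_2(S)-G_1(c_1r^{1-n})F_1(S)$ for $r>r_0$, $S(r_0)=s_0\in(0,1)$, $0<S<1$. The function $f=f_1/f_2$ is a strictly increasing bijection of $(0,1)$ onto $(0,\infty)$; when $c_1c_2>0$ define $s^*=f^{-1}\big(c_1a^{(1)}_0/(c_2a^{(2)}_0)\big)\in(0,1)$. *)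

theory Defs
  imports "HOL-Analysis.Analysis"
begin

definition gpoly :: "(nat \<Rightarrow> real) \<Rightarrow> (nat \<Rightarrow> real) \<Rightarrow> nat \<Rightarrow> real \<Rightarrow> real" where
  "gpoly a alpha N s = a 0 + (\<Sum>j=1..N. a j * s powr alpha j)"

definition admissible_g :: "(nat \<Rightarrow> real) \<Rightarrow> (nat \<Rightarrow> real) \<Rightarrow> nat \<Rightarrow> bool" where
  "admissible_g a alpha N \<longleftrightarrow> a 0 > 0 \<and> (\<forall>j\<in>{1..N}. a j \<ge> 0)
     \<and> (N \<ge> 1 \<longrightarrow> alpha 1 > 0) \<and> strict_mono_on {1..N} alpha"

definition Gfun :: "(nat \<Rightarrow> real) \<Rightarrow> (nat \<Rightarrow> real) \<Rightarrow> nat \<Rightarrow> real \<Rightarrow> real" where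
  "Gfun a alpha N u = gpoly a alpha N \<bar>u\<bar> * u"

definition C1_on :: "real set \<Rightarrow> (real \<Rightarrow> real) \<Rightarrow> bool" where
  "C1_on A f \<longleftrightarrow> (\<exists>f'. (\<forall>x\<in>A. (f has_real_derivative f' x) (at x)) \<and> continuous_on A f')"

definition assumptionA :: "(real \<Rightarrow> real) \<Rightarrow> (real \<Rightarrow> real) \<Rightarrow> bool" where
  "assumptionA f1 f2 \<longleftrightarrow>
     continuous_on {0..1} f1 \<and> continuous_on {0..1} f2 \<and>
     C1_on {0<..<1} f1 \<and> C1_on {0<..<1} f2 \<and>
     f1 0 = 0 \<and> f2 1 = 0 \<and>
     (\<forall>x\<in>{0<..<1}. deriv f1 x > 0 \<and> deriv f2 x < 0)"

text \<open>Assumption B (dpc stands for p_c').\<close>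
definition assumptionB :: "(real \<Rightarrow> real) \<Rightarrow> bool" where
  "assumptionB dpc \<longleftrightarrow> C1_on {0<..<1} dpc \<and> (\<forall>x\<in>{0<..<1}. dpc x > 0)"

definition Ffun :: "(real \<Rightarrow> real) \<Rightarrow> (real \<Rightarrow> real) \<Rightarrow> real \<Rightarrow> real" where
  "Ffun dpc fi s = 1 / (dpc s * fi s)"

definition solves_IVP ::
  "nat \<Rightarrow> (nat \<Rightarrow> real) \<Rightarrow> (nat \<Rightarrow> real) \<Rightarrow> nat \<Rightarrow> (nat \<Rightarrow> real) \<Rightarrow> (nat \<Rightarrow> real) \<Rightarrow> nat \<Rightarrow>
   (real \<Rightarrow> real) \<Rightarrow> (real \<Rightarrow> real) \<Rightarrow> (real \<Rightarrow> real) \<Rightarrow> real \<Rightarrow> real \<Rightarrow> real \<Rightarrow> real \<Rightarrow>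
   (real \<Rightarrow> real) \<Rightarrow> bool" where
  "solves_IVP n a1 al1 N1 a2 al2 N2 f1 f2 dpc c1 c2 r0 s0 S \<longleftrightarrow>
     continuous_on {r0..} S \<and> S r0 = s0 \<and>
     (\<forall>r\<ge>r0. 0 < S r \<and> S r < 1) \<and>
     (\<forall>r>r0. (S has_real_derivative
         (Gfun a2 al2 N2 (c2 * r powr (1 - real n)) * Ffun dpc f2 (S r)
          - Gfun a1 al1 N1 (c1 * r powr (1 - real n)) * Ffun dpc f1 (S r))) (at r))"

definition sstar :: "(real \<Rightarrow> real) \<Rightarrow> (real \<Rightarrow> real) \<Rightarrow> real \<Rightarrow> real \<Rightarrow> real \<Rightarrow> real \<Rightarrow> real" where
  "sstar f1 f2 c1 c2 a10 a20 = (THE s. s \<in> {0<..<1} \<and> f1 s / f2 s = c1 * a10 / (c2 * a20))"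

end

theory Submission
  imports Defs
begin

text \<open>In dimension two the equation reads \<open>r S'(r) = r G\<^sub>2(c\<^sub>2/r) F\<^sub>2(S) - r G\<^sub>1(c\<^sub>1/r) F\<^sub>1(S)\<close>, and
  \<open>r G(c/r) \<longrightarrow> c g(0)\<close> because all exponents of \<open>g\<close> are positive. Along a solution converging to an
  interior point \<open>s\<^sub>\<infinity>\<close> the quantity \<open>r S'(r)\<close> therefore tends to
  \<open>L = c\<^sub>2 g\<^sub>2(0) F\<^sub>2(s\<^sub>\<infinity>) - c\<^sub>1 g\<^sub>1(0) F\<^sub>1(s\<^sub>\<infinity>)\<close>. If \<open>L \<noteq> 0\<close>, then \<open>S\<close> grows or decays like
  \<open>L ln r\<close> and cannot converge, so \<open>L = 0\<close>. Clearing the positive denominators gives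
  \<open>c\<^sub>2 g\<^sub>2(0) f\<^sub>1(s\<^sub>\<infinity>) = c\<^sub>1 g\<^sub>1(0) f\<^sub>2(s\<^sub>\<infinity>)\<close>, which forces \<open>c\<^sub>1\<close> and \<open>c\<^sub>2\<close> to be nonzero of the
  same sign, and strict monotonicity of \<open>f\<^sub>1/f\<^sub>2\<close> identifies \<open>s\<^sub>\<infinity>\<close> with \<open>s\<^sup>*\<close>.\<close>

lemma C1_on_has_real_derivative:
  assumes "C1_on A f" and "x \<in> A"
  shows "(f has_real_derivative deriv f x) (at x)"
  using assms DERIV_imp_deriv unfolding C1_on_def by metis

lemma assumptionA_f1_less:
  assumes "assumptionA f1 f2" and "0 \<le> x" "x < y" "y \<le> 1"
  shows "f1 x < f1 y"
proof (rule DERIV_pos_imp_increasing_open[OF \<open>x < y\<close>])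
  show "continuous_on {x..y} f1"
    using assms unfolding assumptionA_def by (auto elim: continuous_on_subset)
  fix t assume "x < t" "t < y"
  with assms have "t \<in> {0<..<1}"
    by auto
  with assms(1) show "\<exists>d. (f1 has_real_derivative d) (at t) \<and> d > 0"
    unfolding assumptionA_def by (blast intro: C1_on_has_real_derivative)
qed

lemma assumptionA_f2_less:
  assumes "assumptionA f1 f2" and "0 \<le> x" "x < y" "y \<le> 1"
  shows "f2 y < f2 x"
proof (rule DERIV_neg_imp_decreasing_open[OF \<open>x < y\<close>])
  show "continuous_on {x..y} f2"
    using assms unfolding assumptionA_def by (auto elim: continuous_on_subset)
  fix t assume "x < t" "t < y"
  with assms have "t \<in> {0<..<1}"
    by auto
  with assms(1) show "\<exists>d. (f2 has_real_derivative d) (at t) \<and> d < 0"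
    unfolding assumptionA_def by (blast intro: C1_on_has_real_derivative)
qed

lemma assumptionA_pos:
  assumes "assumptionA f1 f2" and "s \<in> {0<..<1}"
  shows "f1 s > 0" and "f2 s > 0"
  using assumptionA_f1_less[of f1 f2 0 s] assumptionA_f2_less[of f1 f2 s 1] assms
  unfolding assumptionA_def by auto

lemma assumptionA_ratio_strict_mono:
  assumes "assumptionA f1 f2"
  shows "strict_mono_on {0<..<1} (\<lambda>s. f1 s / f2 s)"
proof (rule strict_mono_onI)
  fix x y :: real assume "x \<in> {0<..<1}" "y \<in> {0<..<1}" "x < y"
  then show "f1 x / f2 x < f1 y / f2 y"
    using assms assumptionA_f1_less[of f1 f2 x y] assumptionA_f2_less[of f1 f2 x y]
      assumptionA_pos[of f1 f2 x] assumptionA_pos[of f1 f2 y] by (intro frac_less) auto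
qed

lemma sstar_eqI:
  assumes "assumptionA f1 f2" and "s \<in> {0<..<1}"
    and "f1 s / f2 s = c1 * a10 / (c2 * a20)"
  shows "sstar f1 f2 c1 c2 a10 a20 = s"
  unfolding sstar_def
proof (rule the_equality)
  fix t assume "t \<in> {0<..<1} \<and> f1 t / f2 t = c1 * a10 / (c2 * a20)"
  then show "t = s"
    using assms inj_onD[OF strict_mono_on_imp_inj_on[OF assumptionA_ratio_strict_mono], of f1 f2 t s]
    by auto
qed (use assms in simp)

lemma admissible_g_exponent_pos:
  assumes "admissible_g a alpha N" and "j \<in> {1..N}"
  shows "alpha j > 0"
proof -
  have "alpha 1 > 0" and "alpha 1 \<le> alpha j"
    using assms strict_mono_on_leD[of "{1..N}" alpha 1 j] unfolding admissible_g_def by auto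
  then show ?thesis by linarith
qed

lemma gpoly_abs_tendsto_coeff0:
  assumes "admissible_g a alpha N" and "(h \<longlongrightarrow> 0) F"
  shows "((\<lambda>x. gpoly a alpha N \<bar>h x\<bar>) \<longlongrightarrow> a 0) F"
proof -
  have "((\<lambda>x. a 0 + (\<Sum>j=1..N. a j * \<bar>h x\<bar> powr alpha j))
          \<longlongrightarrow> a 0 + (\<Sum>j=1..N. a j * 0)) F"
    using assms tendsto_rabs_zero[OF assms(2)]
    by (intro tendsto_intros tendsto_zero_powrI) (auto intro: admissible_g_exponent_pos)
  then show ?thesis unfolding gpoly_def by simp
qed

lemma Gfun_inverse_scaled_tendsto:
  assumes "admissible_g a alpha N"
  shows "((\<lambda>r. r * Gfun a alpha N (c / r)) \<longlongrightarrow> c * a 0) at_top"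
proof -
  have "((\<lambda>r. gpoly a alpha N \<bar>c / r\<bar> * c) \<longlongrightarrow> a 0 * c) at_top"
    by (intro tendsto_mult_right gpoly_abs_tendsto_coeff0 assms tendsto_divide_0[OF tendsto_const]
        filterlim_at_top_imp_at_infinity filterlim_ident)
  moreover have "\<forall>\<^sub>F r in at_top. gpoly a alpha N \<bar>c / r\<bar> * c = r * Gfun a alpha N (c / r)"
    using eventually_gt_at_top[of 0] by eventually_elim (simp add: Gfun_def)
  ultimately show ?thesis by (simp add: tendsto_cong mult.commute)
qed

lemma ln_lower_bound_of_scaled_deriv:
  fixes S D :: "real \<Rightarrow> real"
  assumes "0 < R" and "R \<le> r"
    and der: "\<And>x. x \<ge> R \<Longrightarrow> (S has_real_derivative D x) (at x)"
    and bound: "\<And>x. x \<ge> R \<Longrightarrow> c \<le> x * D x"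
  shows "S R + c * (ln r - ln R) \<le> S r"
proof -
  define h where "h t = S t - c * ln t" for t
  have h_der: "(h has_real_derivative D x - c / x) (at x)" if "x \<ge> R" for x
    unfolding h_def using that \<open>0 < R\<close> der[OF that]
    by (auto intro!: derivative_eq_intros)
  have "h R \<le> h r"
  proof (rule DERIV_nonneg_imp_increasing_open[OF \<open>R \<le> r\<close>])
    fix x assume "R < x" "x < r"
    moreover have "c / x \<le> D x"
      using bound[of x] \<open>R < x\<close> \<open>0 < R\<close> by (simp add: divide_le_eq mult.commute)
    ultimately show "\<exists>y. (h has_real_derivative y) (at x) \<and> 0 \<le> y"
      using h_der[of x] by auto
  next
    show "continuous_on {R..r} h"
      using h_der by (intro continuous_at_imp_continuous_on ballI DERIV_isCont) auto
  qed
  then show ?thesis unfolding h_def by (simp add: algebra_simps)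
qed

lemma scaled_deriv_limit_nonpos:
  fixes S D :: "real \<Rightarrow> real"
  assumes conv: "(S \<longlongrightarrow> s) at_top"
    and der: "\<forall>\<^sub>F r in at_top. (S has_real_derivative D r) (at r)"
    and scaled: "((\<lambda>r. r * D r) \<longlongrightarrow> L) at_top"
  shows "L \<le> 0"
proof (rule ccontr)
  assume "\<not> L \<le> 0"
  then have "\<forall>\<^sub>F r in at_top. L / 2 < r * D r"
    using scaled by (intro order_tendstoD) auto
  with der eventually_gt_at_top[of 0]
  have "\<forall>\<^sub>F r in at_top. 0 < r \<and> (S has_real_derivative D r) (at r) \<and> L / 2 \<le> r * D r"
    by eventually_elim auto
  then obtain R where
    R: "\<And>x. x \<ge> R \<Longrightarrow> 0 < x \<and> (S has_real_derivative D x) (at x) \<and> L / 2 \<le> x * D x"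
    unfolding eventually_at_top_linorder by blast
  have "\<forall>\<^sub>F r in at_top. S R + L / 2 * (ln r - ln R) \<le> S r"
    using eventually_ge_at_top[of R]
    by eventually_elim (rule ln_lower_bound_of_scaled_deriv, use R in auto)
  moreover have "LIM r at_top. ln r - ln R :> at_top"
    using filterlim_tendsto_add_at_top[OF tendsto_const[of "- ln R"] ln_at_top] by simp
  then have "LIM r at_top. S R + L / 2 * (ln r - ln R) :> at_top"
    using \<open>\<not> L \<le> 0\<close>
    by (intro filterlim_tendsto_add_at_top[OF tendsto_const]
        filterlim_tendsto_pos_mult_at_top[OF tendsto_const]) auto
  ultimately have "LIM r at_top. S r :> at_top"
    by (rule filterlim_at_top_mono[rotated])
  then have "\<forall>\<^sub>F r in at_top. s + 1 < S r"
    by (simp add: filterlim_at_top_dense)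
  moreover have "\<forall>\<^sub>F r in at_top. S r < s + 1"
    using conv by (intro order_tendstoD) auto
  ultimately have "\<forall>\<^sub>F r in at_top. s + 1 < S r \<and> S r < s + 1"
    by (rule eventually_conj)
  then show False
    by (auto simp: eventually_at_top_linorder)
qed

lemma scaled_deriv_limit_eq_0:
  fixes S D :: "real \<Rightarrow> real"
  assumes "(S \<longlongrightarrow> s) at_top"
    and "\<forall>\<^sub>F r in at_top. (S has_real_derivative D r) (at r)"
    and "((\<lambda>r. r * D r) \<longlongrightarrow> L) at_top"
  shows "L = 0"
proof -
  have "\<forall>\<^sub>F r in at_top. ((\<lambda>r. - S r) has_real_derivative - D r) (at r)"
    using assms(2) by eventually_elim (rule DERIV_minus)
  then have "- L \<le> 0"
    using assms by (intro scaled_deriv_limit_nonpos[of "\<lambda>r. - S r" "- s"]) (auto intro: tendsto_minus)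
  then show ?thesis
    using scaled_deriv_limit_nonpos[OF assms] by simp
qed

lemma Ffun_isCont:
  assumes "C1_on {0<..<1} dpc" and "C1_on {0<..<1} fi" and "s \<in> {0<..<1}"
    and "dpc s \<noteq> 0" and "fi s \<noteq> 0"
  shows "isCont (Ffun dpc fi) s"
proof -
  have "isCont dpc s" and "isCont fi s"
    using assms C1_on_has_real_derivative DERIV_isCont by blast+
  then show ?thesis
    unfolding Ffun_def using assms by (intro continuous_intros) auto
qed

lemma IVP_rhs_scaled_tendsto:
  assumes "admissible_g a1 al1 N1" and "admissible_g a2 al2 N2"
    and "(S \<longlongrightarrow> s) at_top" and "isCont F1 s" and "isCont F2 s"
  shows "((\<lambda>r. r * (Gfun a2 al2 N2 (c2 / r) * F2 (S r) - Gfun a1 al1 N1 (c1 / r) * F1 (S r)))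
           \<longlongrightarrow> c2 * a2 0 * F2 s - c1 * a1 0 * F1 s) at_top"
proof -
  have "((\<lambda>r. F1 (S r)) \<longlongrightarrow> F1 s) at_top" and "((\<lambda>r. F2 (S r)) \<longlongrightarrow> F2 s) at_top"
    using assms isCont_tendsto_compose by blast+
  with assms(1,2) have "((\<lambda>r. r * Gfun a2 al2 N2 (c2 / r) * F2 (S r)
                                - r * Gfun a1 al1 N1 (c1 / r) * F1 (S r))
           \<longlongrightarrow> c2 * a2 0 * F2 s - c1 * a1 0 * F1 s) at_top"
    by (intro tendsto_diff tendsto_mult[OF Gfun_inverse_scaled_tendsto])
  then show ?thesis by (simp add: algebra_simps)
qed

lemma mult_pos_of_balance:
  fixes c1 c2 p q :: real
  assumes "c2 * p = c1 * q" and "p > 0" and "q > 0" and "c1^2 + c2^2 > 0"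
  shows "c1 * c2 > 0"
proof -
  have "c1 = c2 * (p / q)"
    using assms(1,3) by (simp add: field_simps)
  moreover have "c2 \<noteq> 0"
    using assms(4) calculation by auto
  ultimately have "c1 * c2 = c2^2 * (p / q)"
    by (simp add: power2_eq_square)
  then show ?thesis
    using assms(2,3) \<open>c2 \<noteq> 0\<close> by simp
qed

lemma solves_IVP_limit_in_unit_interval:
  assumes "solves_IVP n a1 al1 N1 a2 al2 N2 f1 f2 dpc c1 c2 r0 s0 S" and "(S \<longlongrightarrow> s) at_top"
  shows "s \<in> {0..1}"
proof -
  have "\<forall>\<^sub>F r in at_top. S r \<in> {0..1}"
    using assms(1) unfolding solves_IVP_def
    by (auto simp: eventually_at_top_linorder intro!: exI[of _ r0] less_imp_le)
  then show ?thesis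
    using Lim_in_closed_set[OF closed_atLeastAtMost _ _ assms(2)] by simp
qed

lemma solves_IVP_2_eventually_deriv:
  assumes "solves_IVP 2 a1 al1 N1 a2 al2 N2 f1 f2 dpc c1 c2 r0 s0 S"
  shows "\<forall>\<^sub>F r in at_top. (S has_real_derivative
      Gfun a2 al2 N2 (c2 / r) * Ffun dpc f2 (S r) - Gfun a1 al1 N1 (c1 / r) * Ffun dpc f1 (S r)) (at r)"
  using eventually_gt_at_top[of "max r0 0"]
proof eventually_elim
  case (elim r)
  with assms have "(S has_real_derivative Gfun a2 al2 N2 (c2 * r powr (1 - real 2)) * Ffun dpc f2 (S r)
      - Gfun a1 al1 N1 (c1 * r powr (1 - real 2)) * Ffun dpc f1 (S r)) (at r)"
    unfolding solves_IVP_def by auto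
  moreover have "c * r powr (1 - real 2) = c / r" for c
    using elim by (simp add: powr_minus_divide)
  ultimately show ?case
    by (simp only:)
qed

lemma solves_IVP_2_limit_balance:
  assumes "admissible_g a1 al1 N1" and "admissible_g a2 al2 N2"
    and "assumptionA f1 f2" and "assumptionB dpc"
    and "solves_IVP 2 a1 al1 N1 a2 al2 N2 f1 f2 dpc c1 c2 r0 s0 S"
    and "(S \<longlongrightarrow> s) at_top" and "s \<in> {0<..<1}"
  shows "c2 * (a2 0 * f1 s) = c1 * (a1 0 * f2 s)"
proof -
  have pos: "f1 s > 0" "f2 s > 0" "dpc s > 0"
    using assumptionA_pos[OF assms(3,7)] assms(4,7) unfolding assumptionB_def by auto
  then have "isCont (Ffun dpc f1) s" and "isCont (Ffun dpc f2) s"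
    using Ffun_isCont[of dpc _ s] assms(3,4,7) unfolding assumptionA_def assumptionB_def by auto
  then have "c2 * a2 0 * Ffun dpc f2 s - c1 * a1 0 * Ffun dpc f1 s = 0"
    by (intro scaled_deriv_limit_eq_0[OF assms(6) solves_IVP_2_eventually_deriv[OF assms(5)]]
        IVP_rhs_scaled_tendsto assms(1,2,6))
  with pos show ?thesis
    unfolding Ffun_def by (simp add: field_simps)
qed

theorem lemma2p4:
  fixes a1 al1 a2 al2 :: "nat \<Rightarrow> real" and N1 N2 :: nat
    and f1 f2 dpc S :: "real \<Rightarrow> real" and c1 c2 r0 s0 s_inf :: real
  assumes "admissible_g a1 al1 N1" and "admissible_g a2 al2 N2"
    and "assumptionA f1 f2" and "assumptionB dpc"
    and "c1^2 + c2^2 > 0"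
    and "r0 > 0" and "s0 \<in> {0<..<1}"
    and "solves_IVP 2 a1 al1 N1 a2 al2 N2 f1 f2 dpc c1 c2 r0 s0 S"
    and "(S \<longlongrightarrow> s_inf) at_top"
    and "s_inf \<notin> {0, 1}"
  shows "c1 * c2 > 0 \<and> s_inf = sstar f1 f2 c1 c2 (a1 0) (a2 0)"
proof -
  have s_inf: "s_inf \<in> {0<..<1}"
    using solves_IVP_limit_in_unit_interval[OF assms(8,9)] assms(10) by auto
  have balance: "c2 * (a2 0 * f1 s_inf) = c1 * (a1 0 * f2 s_inf)"
    using solves_IVP_2_limit_balance[OF assms(1-4,8,9) s_inf] .
  have "a1 0 > 0" and "a2 0 > 0"
    using assms(1,2) unfolding admissible_g_def by auto
  moreover note pos = assumptionA_pos[OF assms(3) s_inf]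
  ultimately have c1c2: "c1 * c2 > 0"
    using mult_pos_of_balance[OF balance _ _ assms(5)] by auto
  with \<open>a2 0 > 0\<close> have "c2 * a2 0 \<noteq> 0"
    by auto
  with balance pos have "f1 s_inf / f2 s_inf = c1 * a1 0 / (c2 * a2 0)"
    by (simp add: field_simps)
  with c1c2 show ?thesis
    using sstar_eqI[OF assms(3) s_inf] by auto
qed

end
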